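(* Let $\Sigma_\iota[\lambda]:=\{\mathbf{x}\in \mathbb{Z}_\iota(\lambda)\mid \varphi(\mathbf{x})\ge 0 \text{ for all } \varphi\in\Xi_\iota[\lambda]\}$. Then $\Sigma_\iota[\lambda]$ is a subcrystal of $\mathrm{Im}(\Psi^{\lambda}_{\iota})$; that is, $\Sigma_\iota[\lambda]\subseteq \mathrm{Im}(\Psi^{\lambda}_{\iota})$ and for every $\mathbf{x}\in\Sigma_\iota[\lambda]$ and $i\in\{1,2\}$, each of $\tilde e_i\mathbf{x}$, $\tilde f_i\mathbf{x}$ is either $\mathbf{0}$ or lies in $\Sigma_\iota[\lambda]$.
   Context: Let $a_1,a_2\in\mathbb{Z}_{\ge1}$ with $a_1a_2>4$, let $A=\begin{pmatrix}2&-a_1\\-a_2&2\end{pmatrix}$, $I=\{1,2\}$, and let $\mathfrak g=\mathfrak g(A)$ be the associated Kac–Moody algebra with simple roots $\alpha_1,\alpha_2$, simple coroots $\alpha_1^\vee,\alpha_2^\vee$ (so $\langle\alpha_2,\alpha_1^\vee\rangle=-a_1$, $\langle\alpha_1,\alpha_2^\vee\rangle=-a_2$), fundamental weights $\Lambda_1,\Lambda_2$, weight lattice $P=\mathbb{Z}\Lambda_1\oplus\mathbb{Z}\Lambda_2$. Crystals are Kashiwara crystals with operators $\tilde e_i,\tilde f_i$ (taking values in the crystal or an extra element $\mathbf 0$), $\varepsilon_i,\varphi_i,\mathrm{wt}$. For $k\in\mathbb{Z}$ put $i_k=1$ if $k$ is odd and $i_k=2$ if $k$ is even; write $a_{i_k}$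 for $a_1$ or $a_2$ accordingly. Crystal $\mathbb{Z}^{+\infty}_{\ge0}$: elements $\hat x=(\dots,x_2,x_1)$, $x_k\in\mathbb{Z}_{\ge0}$, $x_k=0$ for $k\gg0$. For $k\ge1$ let $\sigma^+_k(\hat x)=x_k+\sum_{j>k}\langle\alpha_{i_j},\alpha_{i_k}^\vee\rangle x_j$, $\sigma^+_{(i)}=\max\{\sigma^+_k: k\ge1, i_k=i\}$, $M^+_{(i)}$ the set of such $k$ attaining the max. Then $\mathrm{wt}(\hat x)=-\sum_j x_j\alpha_{i_j}$, $\varepsilon_i=\sigma^+_{(i)}$, $\varphi_i=\varepsilon_i+\langle\mathrm{wt},\alpha_i^\vee\rangle$; $\tilde e_i$ subtracts $1$ from $x_{\max M^+_{(i)}}$ if $\sigma^+_{(i)}>0$ and gives $\mathbf 0$ otherwise; $\tilde f_i$ adds $1$ to $x_{\min M^+_{(i)}}$. Crystal $\mathbb{Z}^{-\infty}_{\le0}$: elements $\hat x=(x_0,x_{-1},\dots)$, $x_k\in\mathbb{Z}_{\le0}$, $x_k=0$ for $k\ll0$; for $k\le0$, $\sigma^-_k=-x_k-\sum_{j<k}\langle\alpha_{i_j},\alpha_{i_k}^\vee\rangle x_j$, $\sigma^-_{(i)}$ the max over $k\le0$ with $i_k=i$, $M^-_{(i)}$ the maximizers; $\mathrm{wt}=-\sum_j x_j\alpha_{i_j}$, $\varphi_i=\sigma^-_{(i)}$, $\varepsilon_i=\varphi_i-\langle\mathrm{wt},\alpha_i^\vee\rangle$; $\tilde e_i$ subtracts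 $1$ from $x_{\max M^-_{(i)}}$; $\tilde f_i$ adds $1$ to $x_{\min M^-_{(i)}}$ if $\sigma^-_{(i)}>0$, and is $\mathbf 0$ otherwise. For $\mu\in P$, $\mathbb{Z}_\iota(\mu)=\mathbb{Z}^{+\infty}_{\ge0}\otimes\mathcal T_\mu\otimes\mathbb{Z}^{-\infty}_{\le0}$, whose elements are $\mathbf x=(\dots,x_2,x_1)\otimes t_\mu\otimes(x_0,x_{-1},\dots)$, with: $\mathrm{wt}(\mathbf x)=\mu-\sum_{j\in\mathbb Z}x_j\alpha_{i_j}$; $\sigma_k(\mathbf x)=\sigma^+_k$ for $k\ge1$, $\sigma_k(\mathbf x)=\sigma^-_k-\langle\mathrm{wt}(\mathbf x),\alpha_{i_k}^\vee\rangle$ for $k\le0$; $\sigma_{(i)}=\max\{\sigma_k:i_k=i\}$, $M_{(i)}$ the maximizers; $\varepsilon_i=\sigma_{(i)}$, $\varphi_i=\varepsilon_i+\langle\mathrm{wt},\alpha_i^\vee\rangle$; if $\varepsilon_i>0$, $\tilde e_i$ subtracts $1$ from $x_{\max M_{(i)}}$, else $\tilde e_i\mathbf x=\mathbf 0$; if $\varphi_i>0$, $\tilde f_i$ adds $1$ to $x_{\min M_{(i)}}$, else $\tilde f_i\mathbf x=\mathbf 0$. Let $\mathcal B(\infty)$, $\mathcal B(-\infty)$ be the crystal bases of $U_q^-(\mathfrak g)$, $U_q^+(\mathfrak g)$, and $\Psi^+:\mathcal B(\infty)\hookrightarrow\mathbb{Z}^{+\infty}_{\ge0}$, $\Psi^-:\mathcal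 B(-\infty)\hookrightarrow\mathbb{Z}^{-\infty}_{\le0}$ the Nakashima–Zelevinsky embeddings of crystals for these sequences (sending the highest/lowest elements to the zero sequences). Set $\Psi^\mu_\iota=\Psi^+\otimes\mathrm{id}\otimes\Psi^-$, so $\mathrm{Im}(\Psi^\mu_\iota)=\mathrm{Im}(\Psi^+)\otimes t_\mu\otimes\mathrm{Im}(\Psi^-)\subseteq\mathbb Z_\iota(\mu)$. Put $\alpha=\frac{a_1a_2+\sqrt{a_1^2a_2^2-4a_1a_2}}{2a_2}$, $\beta=\frac{a_1a_2+\sqrt{a_1^2a_2^2-4a_1a_2}}{2a_1}$, $\gamma_k=\alpha$ for $k$ even and $\gamma_k=\beta$ for $k$ odd. Fix $\lambda=k_1\Lambda_1-k_2\Lambda_2$ with $k_1,k_2\in\mathbb Z_{>0}$ such that: if $a_1,a_2\ge2$, either $k_2\le k_1<(a_1-1)k_2$ or $k_1<k_2\le(a_2-1)k_1$; if $a_1=1$, $2k_1\le k_2\le(a_2-2)k_1$; if $a_2=1$, $2k_2\le k_1\le(a_1-2)k_2$. Define $p_0=k_2$, $p_1=k_1$, and for $m\ge0$: $p_{m+2}=a_2p_{m+1}-p_m$ ($m$ even), $p_{m+2}=a_1p_{m+1}-p_m$ ($m$ odd); for $m<0$: $p_m=a_2p_{m+1}-p_{m+2}$ ($m$ even), $p_m=a_1p_{m+1}-p_{m+2}$ ($m$ odd). For $k\in\mathbb Z$ let $\zeta_k$ be the linear function $\mathbf x\mapsto x_k$. Let $\Xi_\iota[\lambda]=\{\gamma_0p_0+\gamma_0\zeta_0-\zeta_1,\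 \gamma_1p_1+\zeta_0-\gamma_1\zeta_1\}\cup\{p_k-\zeta_k,\ \gamma_k\zeta_k-\zeta_{k+1},\ \gamma_{k+1}p_{k+1}-p_k+\zeta_k-\gamma_{k+1}\zeta_{k+1}\mid k\ge1\}\cup\{p_k+\zeta_k,\ \zeta_{k-1}-\gamma_k\zeta_k,\ \gamma_{k-1}p_{k-1}-p_k+\gamma_{k-1}\zeta_{k-1}-\zeta_k\mid k\le0\}$. *)

theory Defs
  imports Complex_Main
begin

(* Elements of Z_iota(mu) are encoded as functions x :: int => int, x k = x_k.
   Weights mu in P are encoded by (m1, m2) = (<mu,alpha_1^vee>, <mu,alpha_2^vee>). *)

definition ik :: "int \<Rightarrow> int" where
  "ik k = (if odd k then 1 else 2)"

(* cartan a1 a2 i j = <alpha_j, alpha_i^vee> *)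
definition cartan :: "int \<Rightarrow> int \<Rightarrow> int \<Rightarrow> int \<Rightarrow> int" where
  "cartan a1 a2 i j = (if i = j then 2 else if i = 1 then - a1 else - a2)"

definition sigma_plus :: "int \<Rightarrow> int \<Rightarrow> (int \<Rightarrow> int) \<Rightarrow> int \<Rightarrow> int" where
  "sigma_plus a1 a2 x k =
     x k + (\<Sum>j\<in>{j. j > k \<and> x j \<noteq> 0}. cartan a1 a2 (ik k) (ik j) * x j)"

definition sigma_minus :: "int \<Rightarrow> int \<Rightarrow> (int \<Rightarrow> int) \<Rightarrow> int \<Rightarrow> int" where
  "sigma_minus a1 a2 x k =
     - x k - (\<Sum>j\<in>{j. j < k \<and> x j \<noteq> 0}. cartan a1 a2 (ik k) (ik j) * x j)"

definition wtc :: "int \<Rightarrow> int \<Rightarrow> int \<Rightarrow> int \<Rightarrow> (int \<Rightarrow> int) \<Rightarrow> int \<Rightarrow> int" where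
  "wtc a1 a2 m1 m2 x i =
     (if i = 1 then m1 else m2) - (\<Sum>j\<in>{j. x j \<noteq> 0}. cartan a1 a2 i (ik j) * x j)"

definition sigmaP_I :: "int \<Rightarrow> int \<Rightarrow> (int \<Rightarrow> int) \<Rightarrow> int \<Rightarrow> int" where
  "sigmaP_I a1 a2 x i = Max {sigma_plus a1 a2 x k | k. k \<ge> 1 \<and> ik k = i}"

definition fplus :: "int \<Rightarrow> int \<Rightarrow> int \<Rightarrow> (int \<Rightarrow> int) \<Rightarrow> (int \<Rightarrow> int)" where
  "fplus a1 a2 i x =
     (let k0 = (LEAST k. k \<ge> 1 \<and> ik k = i \<and> sigma_plus a1 a2 x k = sigmaP_I a1 a2 x i)
      in x(k0 := x k0 + 1))"

(* image of the Nakashima-Zelevinsky embedding of B(infinity): generated from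
   the zero sequence by the operators f_i *)
inductive_set plus_img :: "int \<Rightarrow> int \<Rightarrow> (int \<Rightarrow> int) set" for a1 a2 where
  zero: "(\<lambda>_. 0) \<in> plus_img a1 a2"
| step: "x \<in> plus_img a1 a2 \<Longrightarrow> i \<in> {1, 2} \<Longrightarrow> fplus a1 a2 i x \<in> plus_img a1 a2"

definition sigmaM_I :: "int \<Rightarrow> int \<Rightarrow> (int \<Rightarrow> int) \<Rightarrow> int \<Rightarrow> int" where
  "sigmaM_I a1 a2 x i = Max {sigma_minus a1 a2 x k | k. k \<le> 0 \<and> ik k = i}"

definition eminus :: "int \<Rightarrow> int \<Rightarrow> int \<Rightarrow> (int \<Rightarrow> int) \<Rightarrow> (int \<Rightarrow> int)" where
  "eminus a1 a2 i x =
     (let k0 = (GREATEST k. k \<le> 0 \<and> ik k = i \<and> sigma_minus a1 a2 x k = sigmaM_I a1 a2 x i)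
      in x(k0 := x k0 - 1))"

(* image of the embedding of B(-infinity): generated from zero by the operators e_i *)
inductive_set minus_img :: "int \<Rightarrow> int \<Rightarrow> (int \<Rightarrow> int) set" for a1 a2 where
  zero: "(\<lambda>_. 0) \<in> minus_img a1 a2"
| step: "x \<in> minus_img a1 a2 \<Longrightarrow> i \<in> {1, 2} \<Longrightarrow> eminus a1 a2 i x \<in> minus_img a1 a2"

definition Zset :: "(int \<Rightarrow> int) set" where
  "Zset = {x. finite {k. x k \<noteq> 0} \<and> (\<forall>k\<ge>1. x k \<ge> 0) \<and> (\<forall>k\<le>0. x k \<le> 0)}"

definition Im_Psi :: "int \<Rightarrow> int \<Rightarrow> (int \<Rightarrow> int) set" where
  "Im_Psi a1 a2 = {x. (\<lambda>k. if k \<ge> 1 then x k else 0) \<in> plus_img a1 a2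
                     \<and> (\<lambda>k. if k \<le> 0 then x k else 0) \<in> minus_img a1 a2}"

definition sigmaZ :: "int \<Rightarrow> int \<Rightarrow> int \<Rightarrow> int \<Rightarrow> (int \<Rightarrow> int) \<Rightarrow> int \<Rightarrow> int" where
  "sigmaZ a1 a2 m1 m2 x k =
     (if k \<ge> 1 then sigma_plus a1 a2 x k
      else sigma_minus a1 a2 x k - wtc a1 a2 m1 m2 x (ik k))"

definition sigmaZ_I :: "int \<Rightarrow> int \<Rightarrow> int \<Rightarrow> int \<Rightarrow> (int \<Rightarrow> int) \<Rightarrow> int \<Rightarrow> int" where
  "sigmaZ_I a1 a2 m1 m2 x i = Max {sigmaZ a1 a2 m1 m2 x k | k. ik k = i}"

definition epsZ :: "int \<Rightarrow> int \<Rightarrow> int \<Rightarrow> int \<Rightarrow> (int \<Rightarrow> int) \<Rightarrow> int \<Rightarrow> int" where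
  "epsZ a1 a2 m1 m2 x i = sigmaZ_I a1 a2 m1 m2 x i"

definition phiZ :: "int \<Rightarrow> int \<Rightarrow> int \<Rightarrow> int \<Rightarrow> (int \<Rightarrow> int) \<Rightarrow> int \<Rightarrow> int" where
  "phiZ a1 a2 m1 m2 x i = epsZ a1 a2 m1 m2 x i + wtc a1 a2 m1 m2 x i"

(* None encodes the extra element 0 *)
definition etildeZ :: "int \<Rightarrow> int \<Rightarrow> int \<Rightarrow> int \<Rightarrow> int \<Rightarrow> (int \<Rightarrow> int) \<Rightarrow> (int \<Rightarrow> int) option" where
  "etildeZ a1 a2 m1 m2 i x =
     (if epsZ a1 a2 m1 m2 x i > 0 then
        (let k0 = (GREATEST k. ik k = i \<and> sigmaZ a1 a2 m1 m2 x k = sigmaZ_I a1 a2 m1 m2 x i)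
         in Some (x(k0 := x k0 - 1)))
      else None)"

definition ftildeZ :: "int \<Rightarrow> int \<Rightarrow> int \<Rightarrow> int \<Rightarrow> int \<Rightarrow> (int \<Rightarrow> int) \<Rightarrow> (int \<Rightarrow> int) option" where
  "ftildeZ a1 a2 m1 m2 i x =
     (if phiZ a1 a2 m1 m2 x i > 0 then
        (let k0 = (LEAST k. ik k = i \<and> sigmaZ a1 a2 m1 m2 x k = sigmaZ_I a1 a2 m1 m2 x i)
         in Some (x(k0 := x k0 + 1)))
      else None)"

definition alpha_c :: "int \<Rightarrow> int \<Rightarrow> real" where
  "alpha_c a1 a2 = (a1 * a2 + sqrt (a1\<^sup>2 * a2\<^sup>2 - 4 * a1 * a2)) / (2 * a2)"

definition beta_c :: "int \<Rightarrow> int \<Rightarrow> real" where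
  "beta_c a1 a2 = (a1 * a2 + sqrt (a1\<^sup>2 * a2\<^sup>2 - 4 * a1 * a2)) / (2 * a1)"

definition gam :: "int \<Rightarrow> int \<Rightarrow> int \<Rightarrow> real" where
  "gam a1 a2 k = (if even k then alpha_c a1 a2 else beta_c a1 a2)"

fun pp :: "int \<Rightarrow> int \<Rightarrow> int \<Rightarrow> int \<Rightarrow> nat \<Rightarrow> int" where
  "pp a1 a2 k1 k2 0 = k2"
| "pp a1 a2 k1 k2 (Suc 0) = k1"
| "pp a1 a2 k1 k2 (Suc (Suc m)) =
     (if even m then a2 else a1) * pp a1 a2 k1 k2 (Suc m) - pp a1 a2 k1 k2 m"

fun pm :: "int \<Rightarrow> int \<Rightarrow> int \<Rightarrow> int \<Rightarrow> nat \<Rightarrow> int" where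
  "pm a1 a2 k1 k2 0 = k2"
| "pm a1 a2 k1 k2 (Suc 0) = a1 * k2 - k1"
| "pm a1 a2 k1 k2 (Suc (Suc n)) =
     (if even n then a2 else a1) * pm a1 a2 k1 k2 (Suc n) - pm a1 a2 k1 k2 n"

definition p :: "int \<Rightarrow> int \<Rightarrow> int \<Rightarrow> int \<Rightarrow> int \<Rightarrow> int" where
  "p a1 a2 k1 k2 m = (if m \<ge> 0 then pp a1 a2 k1 k2 (nat m) else pm a1 a2 k1 k2 (nat (- m)))"

definition Xi :: "int \<Rightarrow> int \<Rightarrow> int \<Rightarrow> int \<Rightarrow> ((int \<Rightarrow> int) \<Rightarrow> real) set" where
  "Xi a1 a2 k1 k2 =
    (let g = gam a1 a2; P = (\<lambda>m. real_of_int (p a1 a2 k1 k2 m)) in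
     {\<lambda>x. g 0 * P 0 + g 0 * x 0 - x 1,
      \<lambda>x. g 1 * P 1 + x 0 - g 1 * x 1}
     \<union> (\<Union>k\<in>{k. k \<ge> 1}.
          {\<lambda>x. P k - x k,
           \<lambda>x. g k * x k - x (k + 1),
           \<lambda>x. g (k + 1) * P (k + 1) - P k + x k - g (k + 1) * x (k + 1)})
     \<union> (\<Union>k\<in>{k. k \<le> 0}.
          {\<lambda>x. P k + x k,
           \<lambda>x. x (k - 1) - g k * x k,
           \<lambda>x. g (k - 1) * P (k - 1) - P k + g (k - 1) * x (k - 1) - x k}))"

definition SigmaSet :: "int \<Rightarrow> int \<Rightarrow> int \<Rightarrow> int \<Rightarrow> (int \<Rightarrow> int) set" where
  "SigmaSet a1 a2 k1 k2 = {x \<in> Zset. \<forall>\<phi>\<in>Xi a1 a2 k1 k2. \<phi> x \<ge> 0}"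

end

theory Submission
  imports Defs
begin

(* Put u_k = x_k for k >= 1 and u_k = x_k + p_k for k <= 0.  The inequalities of Xi_iota[lambda]
   then say that u and p - u are nonnegative and that u_{k+1} <= gamma_k u_k and
   p_k - u_k <= gamma_{k+1} (p_{k+1} - u_{k+1}) for all k.  Since p_k - a_{i_k} p_{k+1} + p_{k+2} = 0,
   the difference sigma_k - sigma_{k+2} of two signature entries of the same colour is the second
   difference u_k - a_{i_k} u_{k+1} + u_{k+2}.  So e_i lowers u at a point where this second
   difference is at least 1, and f_i raises u_{k+2} where the second difference at k is at most -1;
   as gamma_{k+1} = a_{i_k} - 1/gamma_k, both moves preserve the ratio bounds.
   For the inclusion in the image, the part of x on k >= 1 is brought down to 0 by such moves in
   Z^{+infinity}, each of them undone by f_i, and the part on k <= 0 is the mirror image, under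
   k -> 1 - k, of such a sequence for the Cartan matrix with a1 and a2 exchanged. *)

definition ak :: "int \<Rightarrow> int \<Rightarrow> int \<Rightarrow> int" where
  "ak a1 a2 k = (if odd k then a1 else a2)"

lemma ik_cases: "ik k = 1 \<or> ik k = 2"
  by (simp add: ik_def)

lemma ik_add2 [simp]: "ik (k + 2) = ik k"
  by (simp add: ik_def)

lemma ik_diff2 [simp]: "ik (k - 2) = ik k"
  by (simp add: ik_def)

lemma ik_of_index: "i \<in> {1, 2} \<Longrightarrow> ik i = i"
  by (auto simp: ik_def)

lemma cartan_same [simp]: "cartan a1 a2 i i = 2"
  by (simp add: cartan_def)

lemma cartan_ik_succ: "cartan a1 a2 (ik k) (ik (k + 1)) = - ak a1 a2 k"
  by (simp add: cartan_def ik_def ak_def)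

lemma all_reflect: "(\<forall>m. Q (- m)) \<longleftrightarrow> (\<forall>k::int. Q k)"
  by (metis minus_minus)

lemma all_reflect_succ: "(\<forall>m. Q (- (m + 1)) (- m)) \<longleftrightarrow> (\<forall>k::int. Q k (k + 1))"
proof
  assume "\<forall>m. Q (- (m + 1)) (- m)"
  then have "Q (- (- k - 1 + 1)) (- (- k - 1))" for k
    by blast
  then show "\<forall>k. Q k (k + 1)"
    by (simp add: add.commute)
next
  assume "\<forall>k. Q k (k + 1)"
  then have "Q (- (m + 1)) (- (m + 1) + 1)" for m
    by blast
  then show "\<forall>m. Q (- (m + 1)) (- m)"
    by simp
qed

lemma all_int_split: "(\<forall>k::int. Q k) \<longleftrightarrow> (\<forall>k\<ge>1. Q k) \<and> Q 0 \<and> (\<forall>k\<le>0. Q (k - 1))"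
proof (intro iffI allI)
  fix k :: int
  assume Q: "(\<forall>k\<ge>1. Q k) \<and> Q 0 \<and> (\<forall>k\<le>0. Q (k - 1))"
  consider "k \<ge> 1" | "k = 0" | "k + 1 \<le> 0"
    by linarith
  then show "Q k"
    using Q by cases (auto dest: spec[of _ "k + 1"])
qed auto

section \<open>Ratio-bounded sequences\<close>

definition ratio_bounded :: "int set \<Rightarrow> (int \<Rightarrow> real) \<Rightarrow> (int \<Rightarrow> int) \<Rightarrow> bool" where
  "ratio_bounded K g u \<longleftrightarrow> (\<forall>k. 0 \<le> u k) \<and> (\<forall>k\<in>K. u (k + 1) \<le> g k * u k)"

lemma ratio_boundedD:
  assumes "ratio_bounded K g u"
  shows ratio_bounded_nonneg: "0 \<le> u k"
    and ratio_bounded_step: "k \<in> K \<Longrightarrow> u (k + 1) \<le> g k * u k"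
  using assms by (auto simp: ratio_bounded_def)

lemma ratio_bounded_decrement:
  fixes A :: int
  assumes u: "ratio_bounded K g u" and "k + 1 \<in> K" and g: "g k > 0" "g (k + 1) = A - 1 / g k"
    and convex: "u k - A * u (k + 1) + u (k + 2) \<ge> 1"
  shows "ratio_bounded K g (u(k := u k - 1))"
proof -
  have "real_of_int (u (k + 2)) \<le> (A - 1 / g k) * u (k + 1)"
    using ratio_bounded_step[OF u \<open>k + 1 \<in> K\<close>] g(2) by (simp add: add.assoc)
  moreover have "1 \<le> real_of_int (u k) - A * u (k + 1) + u (k + 2)"
    using convex by (metis of_int_1 of_int_add of_int_diff of_int_le_iff of_int_mult)
  ultimately have "u (k + 1) / g k \<le> u k - 1"
    by (simp add: algebra_simps)
  then have new_k: "u (k + 1) \<le> g k * (u k - 1)"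
    using g(1) by (simp add: field_simps)
  then have "0 \<le> g k * (u k - 1)"
    using ratio_bounded_nonneg[OF u, of "k + 1"] by linarith
  then have "1 \<le> u k"
    using g(1) by (simp add: zero_le_mult_iff)
  moreover have "u k - 1 \<le> g (k - 1) * u (k - 1)" if "k - 1 \<in> K"
    using ratio_bounded_step[OF u that] by simp
  ultimately show ?thesis
    using u new_k by (auto simp: ratio_bounded_def)
qed

lemma ratio_bounded_increment:
  fixes A :: int
  assumes u: "ratio_bounded K g u" and "k \<in> K"
    and g: "g k > 0" "g (k + 1) = A - 1 / g k" "g (k + 2) \<ge> 0"
    and concave: "u k - A * u (k + 1) + u (k + 2) \<le> -1"
  shows "ratio_bounded K g (u(k + 2 := u (k + 2) + 1))"
proof -
  have "u (k + 1) / g k \<le> u k"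
    using ratio_bounded_step[OF u \<open>k \<in> K\<close>] g(1) by (simp add: field_simps)
  moreover have "real_of_int (u k) - A * u (k + 1) + u (k + 2) \<le> -1"
    using concave by (metis of_int_1 of_int_add of_int_diff of_int_le_iff of_int_mult of_int_minus)
  ultimately have new_k1: "u (k + 2) + 1 \<le> g (k + 1) * u (k + 1)"
    unfolding g(2) by (simp add: algebra_simps)
  have new_k2: "u (k + 2 + 1) \<le> g (k + 2) * (u (k + 2) + 1)" if "k + 2 \<in> K"
  proof -
    have "u (k + 2 + 1) \<le> g (k + 2) * u (k + 2)"
      using ratio_bounded_step[OF u that] .
    also have "\<dots> \<le> g (k + 2) * (u (k + 2) + 1)"
      using g(3) by (simp add: mult_left_mono)
    finally show ?thesis .
  qed
  have "(u(k + 2 := u (k + 2) + 1)) (j + 1) \<le> g j * (u(k + 2 := u (k + 2) + 1)) j" if "j \<in> K" for j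
    using ratio_bounded_step[OF u that] new_k1 new_k2 that
    by (cases "j = k + 1"; cases "j = k + 2") auto
  then show ?thesis
    using ratio_bounded_nonneg[OF u] by (auto simp: ratio_bounded_def)
qed

(* Reading P - u backwards turns P_k - u_k <= g_{k+1} (P_{k+1} - u_{k+1}) into a ratio bound
   of the same shape as the one for u. *)
definition ratio_sandwich :: "(int \<Rightarrow> int) \<Rightarrow> (int \<Rightarrow> real) \<Rightarrow> (int \<Rightarrow> int) \<Rightarrow> bool" where
  "ratio_sandwich P g u \<longleftrightarrow>
     ratio_bounded UNIV g u \<and> ratio_bounded UNIV (\<lambda>m. g (- m)) (\<lambda>m. P (- m) - u (- m))"

lemma ratio_sandwich_iff:
  "ratio_sandwich P g u \<longleftrightarrow>
     (\<forall>k. 0 \<le> u k \<and> u k \<le> P k \<and> u (k + 1) \<le> g k * u k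
        \<and> P k - u k \<le> g (k + 1) * (P (k + 1) - u (k + 1)))"
  unfolding ratio_sandwich_def ratio_bounded_def ball_UNIV
    all_reflect[of "\<lambda>k. 0 \<le> P k - u k"]
    all_reflect_succ[of "\<lambda>k l. real_of_int (P k - u k) \<le> g l * (P l - u l)"]
  by auto

lemma ratio_sandwich_decrement:
  fixes P A u :: "int \<Rightarrow> int" and g :: "int \<Rightarrow> real"
  assumes S: "ratio_sandwich P g u"
    and g: "\<And>k. g k > 0" "\<And>k. g (k + 2) = g k" "\<And>k. g (k + 1) = A k - 1 / g k"
    and P: "\<And>k. P k - A k * P (k + 1) + P (k + 2) = 0"
    and convex: "u k - A k * u (k + 1) + u (k + 2) \<ge> 1"
  shows "ratio_sandwich P g (u(k := u k - 1))"
proof -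
  let ?w = "\<lambda>m. P (- m) - u (- m)"
  have "ratio_bounded UNIV g (u(k := u k - 1))"
    using S g convex by (intro ratio_bounded_decrement[where A = "A k"]) (auto simp: ratio_sandwich_def)
  moreover have "ratio_bounded UNIV (\<lambda>m. g (- m)) (?w(- k - 2 + 2 := ?w (- k - 2 + 2) + 1))"
  proof (rule ratio_bounded_increment[where A = "A k"])
    show "ratio_bounded UNIV (\<lambda>m. g (- m)) ?w"
      using S by (simp add: ratio_sandwich_def)
    show "g (- (- k - 2 + 1)) = A k - 1 / g (- (- k - 2))"
      using g(2,3)[of k] by (simp add: add.commute)
    show "?w (- k - 2) - A k * ?w (- k - 2 + 1) + ?w (- k - 2 + 2) \<le> -1"
      using P[of k] convex by (simp add: algebra_simps)
  qed (use g(1) less_imp_le in auto)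
  moreover have "(\<lambda>m. P (- m) - (u(k := u k - 1)) (- m)) = ?w(- k - 2 + 2 := ?w (- k - 2 + 2) + 1)"
    by (auto simp: fun_eq_iff)
  ultimately show ?thesis
    by (simp add: ratio_sandwich_def)
qed

lemma ratio_sandwich_increment:
  fixes P A u :: "int \<Rightarrow> int" and g :: "int \<Rightarrow> real"
  assumes S: "ratio_sandwich P g u"
    and g: "\<And>k. g k > 0" "\<And>k. g (k + 2) = g k" "\<And>k. g (k + 1) = A k - 1 / g k"
    and P: "\<And>k. P k - A k * P (k + 1) + P (k + 2) = 0"
    and concave: "u k - A k * u (k + 1) + u (k + 2) \<le> -1"
  shows "ratio_sandwich P g (u(k + 2 := u (k + 2) + 1))"
proof -
  let ?w = "\<lambda>m. P (- m) - u (- m)"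
  have "ratio_bounded UNIV g (u(k + 2 := u (k + 2) + 1))"
    using S g concave
    by (intro ratio_bounded_increment[where A = "A k"]) (auto simp: ratio_sandwich_def less_imp_le)
  moreover have "ratio_bounded UNIV (\<lambda>m. g (- m)) (?w(- k - 2 := ?w (- k - 2) - 1))"
  proof (rule ratio_bounded_decrement[where A = "A k"])
    show "ratio_bounded UNIV (\<lambda>m. g (- m)) ?w"
      using S by (simp add: ratio_sandwich_def)
    show "g (- (- k - 2 + 1)) = A k - 1 / g (- (- k - 2))"
      using g(2,3)[of k] by (simp add: add.commute)
    show "?w (- k - 2) - A k * ?w (- k - 2 + 1) + ?w (- k - 2 + 2) \<ge> 1"
      using P[of k] concave by (simp add: algebra_simps)
  qed (use g(1) less_imp_le in auto)
  moreover have "(\<lambda>m. P (- m) - (u(k + 2 := u (k + 2) + 1)) (- m)) = ?w(- k - 2 := ?w (- k - 2) - 1)"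
    by (auto simp: fun_eq_iff add.commute)
  ultimately show ?thesis
    by (simp add: ratio_sandwich_def)
qed

section \<open>The constants gamma and p\<close>

lemma alpha_beta_recurrence:
  fixes a1 a2 :: int
  assumes "a1 > 0" "a2 > 0" "a1 * a2 \<ge> 4"
  shows "alpha_c a1 a2 > 0" "beta_c a1 a2 > 0"
    and "alpha_c a1 a2 = a1 - 1 / beta_c a1 a2" "beta_c a1 a2 = a2 - 1 / alpha_c a1 a2"
proof -
  define n where "n = real_of_int a1 * real_of_int a2"
  define t where "t = n + sqrt (n * (n - 4))"
  have n: "n \<ge> 4"
    using assms(3) unfolding n_def by (metis of_int_le_iff of_int_mult of_int_numeral)
  have a: "real_of_int a1 > 0" "real_of_int a2 > 0"
    using assms(1,2) by simp_all
  have "t > 0"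
    using n by (simp add: t_def add_pos_nonneg)
  have "(t - n)\<^sup>2 = n * (n - 4)"
    using n by (simp add: t_def)
  then have t_sq: "t * t = 2 * n * t - 4 * n"
    by (simp add: power2_eq_square algebra_simps)
  have "a1\<^sup>2 * a2\<^sup>2 - 4 * a1 * a2 = n * (n - 4)"
    by (simp add: n_def power2_eq_square algebra_simps)
  then have alpha: "alpha_c a1 a2 = t / (2 * a2)" and beta: "beta_c a1 a2 = t / (2 * a1)"
    by (simp_all add: alpha_c_def beta_c_def t_def n_def)
  show "alpha_c a1 a2 > 0" "beta_c a1 a2 > 0"
    using \<open>t > 0\<close> a by (simp_all add: alpha beta)
  show "alpha_c a1 a2 = a1 - 1 / beta_c a1 a2" "beta_c a1 a2 = a2 - 1 / alpha_c a1 a2"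
    unfolding alpha beta using \<open>t > 0\<close> a t_sq unfolding n_def by (simp_all add: field_simps)
qed

lemma gam_add2 [simp]: "gam a1 a2 (k + 2) = gam a1 a2 k"
  by (simp add: gam_def)

lemma gam_pos:
  assumes "a1 > 0" "a2 > 0" "a1 * a2 \<ge> 4"
  shows "gam a1 a2 k > 0"
  using alpha_beta_recurrence(1,2)[OF assms] by (simp add: gam_def)

lemma gam_succ:
  assumes "a1 > 0" "a2 > 0" "a1 * a2 \<ge> 4"
  shows "gam a1 a2 (k + 1) = ak a1 a2 k - 1 / gam a1 a2 k"
proof (cases "even k")
  case True
  then show ?thesis
    using alpha_beta_recurrence(4)[OF assms] by (simp add: gam_def ak_def)
next
  case False
  then show ?thesis
    using alpha_beta_recurrence(3)[OF assms] by (simp add: gam_def ak_def)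
qed

lemma p_recurrence: "p a1 a2 k1 k2 k - ak a1 a2 k * p a1 a2 k1 k2 (k + 1) + p a1 a2 k1 k2 (k + 2) = 0"
proof (cases "k \<ge> 0")
  case True
  then obtain m where "k = int m"
    by (metis nonneg_eq_int)
  moreover have "nat (int m + 1) = Suc m" "nat (int m + 2) = Suc (Suc m)"
    by auto
  ultimately show ?thesis
    by (simp add: p_def ak_def)
next
  case False
  show ?thesis
  proof (cases "k = -1")
    case True
    then show ?thesis
      by (simp add: p_def ak_def)
  next
    case False
    define n where "n = nat (- k - 2)"
    with \<open>\<not> k \<ge> 0\<close> False have n: "k = - int n - 2"
      by simp
    then have "nat (- k) = Suc (Suc n)" "nat (- (k + 1)) = Suc n"
      by simp_all
    moreover have "p a1 a2 k1 k2 (k + 2) = pm a1 a2 k1 k2 n"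
      using n by (cases n) (simp_all add: p_def nat_add_distrib)
    ultimately show ?thesis
      using n by (simp add: p_def ak_def)
  qed
qed

(* In these coordinates the inequalities of Xi become homogeneous, see SigmaSet_iff. *)
definition shifted :: "int \<Rightarrow> int \<Rightarrow> int \<Rightarrow> int \<Rightarrow> (int \<Rightarrow> int) \<Rightarrow> int \<Rightarrow> int" where
  "shifted a1 a2 k1 k2 x k = x k + (if k \<le> 0 then p a1 a2 k1 k2 k else 0)"

lemma SigmaSet_iff:
  "x \<in> SigmaSet a1 a2 k1 k2 \<longleftrightarrow>
     finite {k. x k \<noteq> 0} \<and> ratio_sandwich (p a1 a2 k1 k2) (gam a1 a2) (shifted a1 a2 k1 k2 x)"
proof -
  let ?P = "p a1 a2 k1 k2" and ?g = "gam a1 a2" and ?u = "shifted a1 a2 k1 k2 x"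
  define lower where "lower k \<longleftrightarrow> real_of_int (?u (k + 1)) \<le> ?g k * ?u k" for k
  define upper where
    "upper k \<longleftrightarrow> real_of_int (?P k - ?u k) \<le> ?g (k + 1) * (?P (k + 1) - ?u (k + 1))" for k
  have Xi: "(\<forall>\<phi>\<in>Xi a1 a2 k1 k2. 0 \<le> \<phi> x) \<longleftrightarrow>
      lower 0 \<and> upper 0 \<and> (\<forall>k\<ge>1. ?u k \<le> ?P k \<and> lower k \<and> upper k)
      \<and> (\<forall>k\<le>0. 0 \<le> real_of_int (?u k) \<and> upper (k - 1) \<and> lower (k - 1))"
    unfolding Xi_def Let_def lower_def upper_def
    by (simp add: ball_Un ball_UN shifted_def algebra_simps)
  have Z: "x \<in> Zset \<longleftrightarrow> finite {k. x k \<noteq> 0} \<and> (\<forall>k\<ge>1. 0 \<le> ?u k) \<and> (\<forall>k\<le>0. ?u k \<le> ?P k)"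
    by (simp add: Zset_def shifted_def)
  have sign_split: "(\<forall>k::int. Q k) \<longleftrightarrow> (\<forall>k\<ge>1. Q k) \<and> (\<forall>k\<le>0. Q k)" for Q
    by (meson int_one_le_iff_zero_less not_le)
  show ?thesis
    unfolding SigmaSet_def mem_Collect_eq Z Xi ratio_sandwich_iff of_int_0_le_iff
      lower_def[symmetric] upper_def[symmetric]
    using all_int_split[of lower] all_int_split[of upper] sign_split[of "\<lambda>k. 0 \<le> ?u k \<and> ?u k \<le> ?P k"]
    by blast
qed

lemma SigmaSet_ratio_conditions:
  assumes "x \<in> SigmaSet a1 a2 k1 k2"
  defines "u \<equiv> shifted a1 a2 k1 k2 x"
  shows "\<And>k. 0 \<le> u k" "\<And>k. u k \<le> p a1 a2 k1 k2 k" "\<And>k. u (k + 1) \<le> gam a1 a2 k * u k"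
    "\<And>k. p a1 a2 k1 k2 k - u k \<le> gam a1 a2 (k + 1) * (p a1 a2 k1 k2 (k + 1) - u (k + 1))"
  using assms unfolding SigmaSet_iff ratio_sandwich_iff by blast+

section \<open>Signatures of finitely supported sequences\<close>

lemma support_bounded:
  fixes x :: "int \<Rightarrow> int"
  assumes "finite {j. x j \<noteq> 0}"
  obtains N where "\<And>j. x j \<noteq> 0 \<Longrightarrow> - N \<le> j \<and> j \<le> N"
proof
  fix j assume "x j \<noteq> 0"
  then have "\<bar>j\<bar> \<le> Max (abs ` {j. x j \<noteq> 0})"
    using assms by (intro Max_ge) auto
  then show "- Max (abs ` {j. x j \<noteq> 0}) \<le> j \<and> j \<le> Max (abs ` {j. x j \<noteq> 0})"
    by linarith
qed

lemma finite_support_update: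
  "finite {j. x j \<noteq> (0::int)} \<Longrightarrow> finite {j. (x(k0 := v)) j \<noteq> 0}"
  by (rule finite_subset[of _ "insert k0 {j. x j \<noteq> 0}"]) auto

lemma sum_support_update:
  fixes y :: "int \<Rightarrow> int"
  assumes fin: "finite {k. y k \<noteq> 0}"
  shows "(\<Sum>k | (y(k0 := v)) k \<noteq> 0. (y(k0 := v)) k) = (\<Sum>k | y k \<noteq> 0. y k) - y k0 + v"
proof -
  define T where "T = insert k0 {k. y k \<noteq> 0}"
  have T: "finite T" "k0 \<in> T"
    using fin by (simp_all add: T_def)
  have "(\<Sum>k | (y(k0 := v)) k \<noteq> 0. (y(k0 := v)) k) = (\<Sum>k\<in>T. (y(k0 := v)) k)"
    using T(1) by (intro sum.mono_neutral_left) (auto simp: T_def)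
  also have "\<dots> = v + (\<Sum>k\<in>T - {k0}. y k)"
    using T by (simp add: sum.remove)
  also have "(\<Sum>k\<in>T - {k0}. y k) = (\<Sum>k\<in>T. y k) - y k0"
    using T by (simp add: sum.remove)
  also have "(\<Sum>k\<in>T. y k) = (\<Sum>k | y k \<noteq> 0. y k)"
    using T(1) by (intro sum.mono_neutral_right) (auto simp: T_def)
  finally show ?thesis
    by simp
qed

lemma sum_over_support:
  fixes x :: "int \<Rightarrow> int"
  assumes "finite T" "{j. x j \<noteq> 0} \<subseteq> T"
  shows "(\<Sum>j\<in>{j. R j \<and> x j \<noteq> 0}. c j * x j) = (\<Sum>j\<in>{j\<in>T. R j}. c j * x j)"
  using assms by (intro sum.mono_neutral_left) auto

lemma sigma_plus_via_superset:
  assumes "finite T" "{j. x j \<noteq> 0} \<subseteq> T"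
  shows "sigma_plus a1 a2 x k = x k + (\<Sum>j\<in>{j\<in>T. j > k}. cartan a1 a2 (ik k) (ik j) * x j)"
  unfolding sigma_plus_def using sum_over_support[OF assms, where R = "\<lambda>j. j > k"] by simp

lemma sigma_plus_diff2:
  assumes fin: "finite {j. x j \<noteq> 0}"
  shows "sigma_plus a1 a2 x k - sigma_plus a1 a2 x (k + 2) = x k - ak a1 a2 k * x (k + 1) + x (k + 2)"
proof -
  define T where "T = {k + 1, k + 2} \<union> {j. x j \<noteq> 0}"
  have T: "finite T" "{j. x j \<noteq> 0} \<subseteq> T"
    using fin by (auto simp: T_def)
  have "{j\<in>T. j > k} = insert (k + 1) (insert (k + 2) {j\<in>T. j > k + 2})"
    by (auto simp: T_def)
  then have "(\<Sum>j\<in>{j\<in>T. j > k}. cartan a1 a2 (ik k) (ik j) * x j)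
      = - ak a1 a2 k * x (k + 1) + 2 * x (k + 2) + (\<Sum>j\<in>{j\<in>T. j > k + 2}. cartan a1 a2 (ik k) (ik j) * x j)"
    using T(1) cartan_ik_succ[of a1 a2 k] by simp
  then show ?thesis
    using sigma_plus_via_superset[OF T, of a1 a2] by simp
qed

lemma sigma_plus_update:
  assumes fin: "finite {j. x j \<noteq> 0}"
  shows "sigma_plus a1 a2 (x(k0 := v)) k = sigma_plus a1 a2 x k
     + (if k = k0 then v - x k0 else if k < k0 then cartan a1 a2 (ik k) (ik k0) * (v - x k0) else 0)"
proof -
  define T where "T = insert k0 {j. x j \<noteq> 0}"
  have T: "finite T" "{j. x j \<noteq> 0} \<subseteq> T" "{j. (x(k0 := v)) j \<noteq> 0} \<subseteq> T"
    using fin by (auto simp: T_def)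
  have "(\<Sum>j\<in>{j\<in>T. j > k}. cartan a1 a2 (ik k) (ik j) * (x(k0 := v)) j)
      = (\<Sum>j\<in>{j\<in>T. j > k}. cartan a1 a2 (ik k) (ik j) * x j
           + (if j = k0 then cartan a1 a2 (ik k) (ik k0) * (v - x k0) else 0))"
    by (intro sum.cong) (auto simp: algebra_simps)
  also have "\<dots> = (\<Sum>j\<in>{j\<in>T. j > k}. cartan a1 a2 (ik k) (ik j) * x j)
      + (if k < k0 then cartan a1 a2 (ik k) (ik k0) * (v - x k0) else 0)"
    using T(1) by (simp add: sum.distrib T_def)
  finally show ?thesis
    unfolding sigma_plus_via_superset[OF T(1,3)] sigma_plus_via_superset[OF T(1,2)] by auto
qed

lemma sigma_plus_above_support:
  assumes "\<And>j. x j \<noteq> 0 \<Longrightarrow> j \<le> N" "k > N"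
  shows "sigma_plus a1 a2 x k = 0"
proof -
  have "{j. k < j \<and> x j \<noteq> 0} = {}" "x k = 0"
    using assms by force+
  then show ?thesis
    by (simp add: sigma_plus_def)
qed

lemma sigma_minus_below_support:
  assumes "\<And>j. x j \<noteq> 0 \<Longrightarrow> N \<le> j" "k < N"
  shows "sigma_minus a1 a2 x k = 0"
proof -
  have "{j. j < k \<and> x j \<noteq> 0} = {}" "x k = 0"
    using assms by force+
  then show ?thesis
    by (simp add: sigma_minus_def)
qed

lemma finite_range_sigma_plus:
  assumes fin: "finite {j. x j \<noteq> 0}"
  shows "finite (range (sigma_plus a1 a2 x))"
proof -
  obtain N where N: "\<And>j. x j \<noteq> 0 \<Longrightarrow> - N \<le> j \<and> j \<le> N"
    using support_bounded[OF fin] by blast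
  define h where "h i = (\<Sum>j\<in>{j. x j \<noteq> 0}. cartan a1 a2 i (ik j) * x j)" for i
  have "sigma_plus a1 a2 x k \<in> sigma_plus a1 a2 x ` {- N..N} \<union> {0} \<union> h ` {1, 2}" for k
  proof -
    consider "k < - N" | "k > N" | "k \<in> {- N..N}"
      by fastforce
    then show ?thesis
    proof cases
      case 1
      then have "{j. k < j \<and> x j \<noteq> 0} = {j. x j \<noteq> 0}" "x k = 0"
        using N by force+
      then show ?thesis
        using ik_cases[of k] by (auto simp: sigma_plus_def h_def)
    next
      case 2
      then have "{j. k < j \<and> x j \<noteq> 0} = {}" "x k = 0"
        using N by force+
      then show ?thesis
        by (simp add: sigma_plus_def)
    qed simp
  qed
  then have "range (sigma_plus a1 a2 x) \<subseteq> sigma_plus a1 a2 x ` {- N..N} \<union> {0} \<union> h ` {1, 2}"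
    by blast
  then show ?thesis
    by (rule finite_subset) simp
qed

lemma finite_sigma_plus_values:
  "finite {j. x j \<noteq> 0} \<Longrightarrow> finite {sigma_plus a1 a2 x k | k. P k}"
  by (rule finite_subset[OF _ finite_range_sigma_plus]) blast+

lemma greatest_maximizer:
  fixes f :: "int \<Rightarrow> int" and Q :: "int \<Rightarrow> bool"
  assumes fin: "finite {f k | k. Q k}" and "Q k1"
    and bounded: "\<And>k. Q k \<Longrightarrow> k > N \<Longrightarrow> f k < Max {f k | k. Q k}"
  obtains k0 where "Q k0" "f k0 = Max {f k | k. Q k}" "\<And>k. Q k \<Longrightarrow> f k \<le> Max {f k | k. Q k}"
    "\<And>k. Q k \<Longrightarrow> k > k0 \<Longrightarrow> f k < Max {f k | k. Q k}"
    "(GREATEST k. Q k \<and> f k = Max {f k | k. Q k}) = k0"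
proof -
  define M where "M = Max {f k | k. Q k}"
  have le_M: "f k \<le> M" if "Q k" for k
    unfolding M_def using fin that by (intro Max_ge) auto
  have "M \<in> {f k | k. Q k}"
    unfolding M_def using fin \<open>Q k1\<close> by (intro Max_in) auto
  then obtain km where km: "Q km" "f km = M"
    by blast
  define T where "T = {k. Q k \<and> f k = M \<and> km \<le> k}"
  have "T \<subseteq> {km..N}"
    using bounded by (force simp: T_def M_def)
  then have "finite T"
    by (rule finite_subset) simp
  moreover have "km \<in> T"
    using km by (simp add: T_def)
  ultimately have k0: "Max T \<in> T" "\<And>k. k \<in> T \<Longrightarrow> k \<le> Max T"
    using Max_in Max_ge by blast+
  have above: "f k < M" if "Q k" "k > Max T" for k
    using k0 le_M[OF \<open>Q k\<close>] that by (force simp: T_def)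
  have "(GREATEST k. Q k \<and> f k = M) = Max T"
  proof (rule Greatest_equality)
    show "Q (Max T) \<and> f (Max T) = M"
      using k0(1) by (simp add: T_def)
    show "k \<le> Max T" if "Q k \<and> f k = M" for k
      using above[of k] that by force
  qed
  with k0(1) le_M above show ?thesis
    unfolding M_def by (intro that[of "Max T"]) (auto simp: T_def M_def)
qed

lemma least_maximizer:
  fixes f :: "int \<Rightarrow> int" and Q :: "int \<Rightarrow> bool"
  assumes fin: "finite {f k | k. Q k}" and "Q k1"
    and bounded: "\<And>k. Q k \<Longrightarrow> k < N \<Longrightarrow> f k < Max {f k | k. Q k}"
  obtains k0 where "Q k0" "f k0 = Max {f k | k. Q k}" "\<And>k. Q k \<Longrightarrow> f k \<le> Max {f k | k. Q k}"
    "\<And>k. Q k \<Longrightarrow> k < k0 \<Longrightarrow> f k < Max {f k | k. Q k}"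
    "(LEAST k. Q k \<and> f k = Max {f k | k. Q k}) = k0"
proof -
  define M where "M = Max {f k | k. Q k}"
  have same_values: "{f (- k) | k. Q (- k)} = {f k | k. Q k}"
    by (auto; metis minus_minus)
  obtain k0 where k0: "Q (- k0)" "f (- k0) = M" "\<And>k. Q (- k) \<Longrightarrow> f (- k) \<le> M"
    "\<And>k. Q (- k) \<Longrightarrow> k > k0 \<Longrightarrow> f (- k) < M"
    using greatest_maximizer[of "\<lambda>k. f (- k)" "\<lambda>k. Q (- k)" "- k1" "- N"] fin \<open>Q k1\<close> bounded
    unfolding same_values M_def by auto
  have below: "f k < M" if "Q k" "k < - k0" for k
    using k0(4)[of "- k"] that by simp
  have "(LEAST k. Q k \<and> f k = M) = - k0"
  proof (rule Least_equality)
    show "Q (- k0) \<and> f (- k0) = M"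
      using k0(1,2) by simp
    show "- k0 \<le> k" if "Q k \<and> f k = M" for k
      using below[of k] that by force
  qed
  moreover have "f k \<le> M" if "Q k" for k
    using k0(3)[of "- k"] that by simp
  ultimately show ?thesis
    using k0(1,2) below unfolding M_def by (intro that[of "- k0"]) auto
qed

section \<open>Closure under the Kashiwara operators\<close>

lemma sigmaZ_eq_sigma_plus:
  assumes fin: "finite {j. x j \<noteq> 0}"
  shows "sigmaZ a1 a2 m1 m2 x k
    = sigma_plus a1 a2 x k - (if k \<le> 0 then (if ik k = 1 then m1 else m2) else 0)"
proof (cases "k \<le> 0")
  case True
  define T where "T = insert k {j. x j \<noteq> 0}"
  have T: "finite T" "{j. x j \<noteq> 0} \<subseteq> T"
    using fin by (auto simp: T_def)
  let ?c = "\<lambda>j. cartan a1 a2 (ik k) (ik j) * x j"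
  define below above where "below = {j\<in>T. j < k}" and "above = {j\<in>T. j > k}"
  have split: "T = insert k (below \<union> above)" "k \<notin> below \<union> above" "below \<inter> above = {}"
    "finite below" "finite above"
    using T(1) by (auto simp: T_def below_def above_def)
  have "(\<Sum>j\<in>T. ?c j) = (\<Sum>j\<in>below. ?c j) + 2 * x k + (\<Sum>j\<in>above. ?c j)"
    unfolding split(1) using split(2-5) by (simp add: sum.union_disjoint)
  moreover have "(\<Sum>j\<in>{j. x j \<noteq> 0}. ?c j) = (\<Sum>j\<in>T. ?c j)"
    using sum_over_support[OF T, where R = "\<lambda>_. True"] by simp
  ultimately show ?thesis
    using True sum_over_support[OF T, where R = "\<lambda>j. j < k"] sigma_plus_via_superset[OF T, of a1 a2 k]
    by (simp add: sigmaZ_def sigma_minus_def wtc_def below_def above_def)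
qed (simp add: sigmaZ_def)

lemma finite_range_sigmaZ:
  assumes fin: "finite {j. x j \<noteq> 0}"
  shows "finite (range (sigmaZ a1 a2 m1 m2 x))"
proof -
  have "range (sigmaZ a1 a2 m1 m2 x) \<subseteq> (\<lambda>(s, m). s - m) ` (range (sigma_plus a1 a2 x) \<times> {0, m1, m2})"
    by (force simp: sigmaZ_eq_sigma_plus[OF fin])
  then show ?thesis
    by (rule finite_subset) (simp add: finite_range_sigma_plus[OF fin])
qed

lemma sigmaZ_diff2:
  fixes a1 a2 k1 k2 :: int
  assumes fin: "finite {j. x j \<noteq> 0}"
  defines "u \<equiv> shifted a1 a2 k1 k2 x"
  shows "sigmaZ a1 a2 k1 (- k2) x k - sigmaZ a1 a2 k1 (- k2) x (k + 2)
     = u k - ak a1 a2 k * u (k + 1) + u (k + 2)"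
proof -
  have diff: "sigmaZ a1 a2 k1 (- k2) x k - sigmaZ a1 a2 k1 (- k2) x (k + 2)
     = x k - ak a1 a2 k * x (k + 1) + x (k + 2)
       - (if k \<le> 0 then (if ik k = 1 then k1 else - k2) else 0)
       + (if k + 2 \<le> 0 then (if ik k = 1 then k1 else - k2) else 0)"
    using sigma_plus_diff2[OF fin, of a1 a2 k] by (simp add: sigmaZ_eq_sigma_plus[OF fin])
  have p01: "p a1 a2 k1 k2 0 = k2" "p a1 a2 k1 k2 1 = k1"
    by (simp_all add: p_def)
  consider "k \<ge> 1" | "k = 0" | "k = -1" | "k \<le> -2"
    by linarith
  then show ?thesis
  proof cases
    case 1
    then show ?thesis
      using diff by (simp add: u_def shifted_def)
  next
    case 2
    then show ?thesis
      using diff p01 by (simp add: u_def shifted_def ik_def)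
  next
    case 3
    then show ?thesis
      using diff p01 p_recurrence[of a1 a2 k1 k2 k] by (simp add: u_def shifted_def ik_def ak_def algebra_simps)
  next
    case 4
    then show ?thesis
      using diff p_recurrence[of a1 a2 k1 k2 k] by (simp add: u_def shifted_def algebra_simps)
  qed
qed

lemma etildeZ_preserves_SigmaSet:
  assumes a: "a1 > 0" "a2 > 0" "a1 * a2 \<ge> 4" and "i \<in> {1, 2}"
    and x: "x \<in> SigmaSet a1 a2 k1 k2" and y: "etildeZ a1 a2 k1 (- k2) i x = Some y"
  shows "y \<in> SigmaSet a1 a2 k1 k2"
proof -
  let ?f = "sigmaZ a1 a2 k1 (- k2) x" and ?u = "shifted a1 a2 k1 k2 x"
  let ?M = "Max {?f k | k. ik k = i}"
  have fin: "finite {j. x j \<noteq> 0}" and S: "ratio_sandwich (p a1 a2 k1 k2) (gam a1 a2) ?u"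
    using x SigmaSet_iff by blast+
  obtain N where N: "\<And>j. x j \<noteq> 0 \<Longrightarrow> - N \<le> j \<and> j \<le> N"
    using support_bounded[OF fin] by blast
  have M_pos: "?M > 0"
    and y_eq: "y = x((GREATEST k. ik k = i \<and> ?f k = ?M) := x (GREATEST k. ik k = i \<and> ?f k = ?M) - 1)"
    using y unfolding etildeZ_def epsZ_def sigmaZ_I_def Let_def by (auto split: if_splits)
  have above: "?f k < ?M" if "ik k = i" "k > max N 0" for k
    using sigmaZ_eq_sigma_plus[OF fin, of a1 a2 k1 "- k2" k] sigma_plus_above_support[of x N k a1 a2]
      N that M_pos by simp
  have "finite {?f k | k. ik k = i}"
    by (rule finite_subset[OF _ finite_range_sigmaZ[OF fin]]) blast
  then obtain k0 where k0: "ik k0 = i" "?f k0 = ?M" "\<And>k. ik k = i \<Longrightarrow> ?f k \<le> ?M"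
      "\<And>k. ik k = i \<Longrightarrow> k > k0 \<Longrightarrow> ?f k < ?M" "(GREATEST k. ik k = i \<and> ?f k = ?M) = k0"
    using greatest_maximizer[OF _ ik_of_index[OF \<open>i \<in> {1, 2}\<close>] above] by blast
  have "?u k0 - ak a1 a2 k0 * ?u (k0 + 1) + ?u (k0 + 2) \<ge> 1"
    using k0(1,2) k0(4)[of "k0 + 2"] sigmaZ_diff2[OF fin, of a1 a2 k1 k2 k0] by simp
  then have "ratio_sandwich (p a1 a2 k1 k2) (gam a1 a2) (?u(k0 := ?u k0 - 1))"
    by (intro ratio_sandwich_decrement[OF S gam_pos[OF a] gam_add2 gam_succ[OF a] p_recurrence])
  moreover have "y = x(k0 := x k0 - 1)"
    using y_eq k0(5) by simp
  then have "shifted a1 a2 k1 k2 y = ?u(k0 := ?u k0 - 1)"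
    by (simp add: shifted_def fun_eq_iff)
  ultimately show ?thesis
    using SigmaSet_iff finite_support_update[OF fin] \<open>y = x(k0 := x k0 - 1)\<close> by metis
qed

lemma ftildeZ_preserves_SigmaSet:
  assumes a: "a1 > 0" "a2 > 0" "a1 * a2 \<ge> 4" and "i \<in> {1, 2}"
    and x: "x \<in> SigmaSet a1 a2 k1 k2" and y: "ftildeZ a1 a2 k1 (- k2) i x = Some y"
  shows "y \<in> SigmaSet a1 a2 k1 k2"
proof -
  let ?f = "sigmaZ a1 a2 k1 (- k2) x" and ?u = "shifted a1 a2 k1 k2 x"
  let ?M = "Max {?f k | k. ik k = i}"
  have fin: "finite {j. x j \<noteq> 0}" and S: "ratio_sandwich (p a1 a2 k1 k2) (gam a1 a2) ?u"
    using x SigmaSet_iff by blast+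
  obtain N where N: "\<And>j. x j \<noteq> 0 \<Longrightarrow> - N \<le> j \<and> j \<le> N"
    using support_bounded[OF fin] by blast
  have phi_pos: "?M + wtc a1 a2 k1 (- k2) x i > 0"
    and y_eq: "y = x((LEAST k. ik k = i \<and> ?f k = ?M) := x (LEAST k. ik k = i \<and> ?f k = ?M) + 1)"
    using y unfolding ftildeZ_def phiZ_def epsZ_def sigmaZ_I_def Let_def by (auto split: if_splits)
  have below: "?f k < ?M" if "ik k = i" "k < min (- N) 0" for k
    using sigma_minus_below_support[of x "- N" k a1 a2] N that phi_pos by (simp add: sigmaZ_def)
  have "finite {?f k | k. ik k = i}"
    by (rule finite_subset[OF _ finite_range_sigmaZ[OF fin]]) blast
  then obtain k0 where k0: "ik k0 = i" "?f k0 = ?M" "\<And>k. ik k = i \<Longrightarrow> ?f k \<le> ?M"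
      "\<And>k. ik k = i \<Longrightarrow> k < k0 \<Longrightarrow> ?f k < ?M" "(LEAST k. ik k = i \<and> ?f k = ?M) = k0"
    using least_maximizer[OF _ ik_of_index[OF \<open>i \<in> {1, 2}\<close>] below] by blast
  have "?u (k0 - 2) - ak a1 a2 (k0 - 2) * ?u (k0 - 2 + 1) + ?u (k0 - 2 + 2) \<le> -1"
    using k0(1,2) k0(4)[of "k0 - 2"] sigmaZ_diff2[OF fin, of a1 a2 k1 k2 "k0 - 2"] by simp
  then have "ratio_sandwich (p a1 a2 k1 k2) (gam a1 a2) (?u(k0 - 2 + 2 := ?u (k0 - 2 + 2) + 1))"
    by (intro ratio_sandwich_increment[OF S gam_pos[OF a] gam_add2 gam_succ[OF a] p_recurrence])
  moreover have "y = x(k0 := x k0 + 1)"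
    using y_eq k0(5) by simp
  then have "shifted a1 a2 k1 k2 y = ?u(k0 - 2 + 2 := ?u (k0 - 2 + 2) + 1)"
    by (simp add: shifted_def fun_eq_iff)
  ultimately show ?thesis
    using SigmaSet_iff finite_support_update[OF fin] \<open>y = x(k0 := x k0 + 1)\<close> by metis
qed

lemma crystal_operators_preserve_SigmaSet:
  assumes "a1 > 0" "a2 > 0" "a1 * a2 \<ge> 4" "i \<in> {1, 2}" "x \<in> SigmaSet a1 a2 k1 k2"
  shows "(case etildeZ a1 a2 k1 (- k2) i x of None \<Rightarrow> True | Some y \<Rightarrow> y \<in> SigmaSet a1 a2 k1 k2)
    \<and> (case ftildeZ a1 a2 k1 (- k2) i x of None \<Rightarrow> True | Some y \<Rightarrow> y \<in> SigmaSet a1 a2 k1 k2)"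
  using etildeZ_preserves_SigmaSet[OF assms] ftildeZ_preserves_SigmaSet[OF assms]
  by (simp split: option.split)

section \<open>Membership in the image of the embedding\<close>

lemma fplus_undoes_decrement:
  assumes fin: "finite {j. y j \<noteq> 0}" and k0: "k0 \<ge> 1" "ik k0 = i"
    and max: "sigma_plus a1 a2 y k0 = sigmaP_I a1 a2 y i"
    and greatest: "\<And>k. k \<ge> 1 \<Longrightarrow> ik k = i \<Longrightarrow> k > k0 \<Longrightarrow> sigma_plus a1 a2 y k < sigmaP_I a1 a2 y i"
  shows "fplus a1 a2 i (y(k0 := y k0 - 1)) = y"
proof -
  define z where "z = y(k0 := y k0 - 1)"
  let ?M = "sigmaP_I a1 a2 y i"
  have le_M: "sigma_plus a1 a2 y k \<le> ?M" if "k \<ge> 1" "ik k = i" for k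
    unfolding sigmaP_I_def using finite_sigma_plus_values[OF fin] that by (intro Max_ge) auto
  have z: "sigma_plus a1 a2 z k = sigma_plus a1 a2 y k - (if k = k0 then 1 else if k < k0 then 2 else 0)"
    if "ik k = i" for k
    using sigma_plus_update[OF fin, of a1 a2 k0 "y k0 - 1" k] that k0(2) by (auto simp: z_def)
  have z_max: "sigmaP_I a1 a2 z i = ?M - 1"
    unfolding sigmaP_I_def[of a1 a2 z]
  proof (rule Max_eqI)
    show "finite {sigma_plus a1 a2 z k | k. k \<ge> 1 \<and> ik k = i}"
      unfolding z_def by (rule finite_sigma_plus_values[OF finite_support_update[OF fin]])
    show "?M - 1 \<in> {sigma_plus a1 a2 z k | k. k \<ge> 1 \<and> ik k = i}"
      using z[of k0] k0 max by force
    show "w \<le> ?M - 1" if "w \<in> {sigma_plus a1 a2 z k | k. k \<ge> 1 \<and> ik k = i}" for w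
      using that z le_M greatest by (force simp: not_less_iff_gr_or_eq)
  qed
  have "(LEAST k. k \<ge> 1 \<and> ik k = i \<and> sigma_plus a1 a2 z k = sigmaP_I a1 a2 z i) = k0"
  proof (rule Least_equality)
    show "k0 \<ge> 1 \<and> ik k0 = i \<and> sigma_plus a1 a2 z k0 = sigmaP_I a1 a2 z i"
      using k0 z[of k0] max z_max by simp
    show "k0 \<le> k" if "k \<ge> 1 \<and> ik k = i \<and> sigma_plus a1 a2 z k = sigmaP_I a1 a2 z i" for k
      using that z[of k] le_M[of k] z_max by (cases "k < k0") auto
  qed
  then show ?thesis
    by (simp add: fplus_def Let_def fun_eq_iff z_def)
qed

lemma ratio_bounded_has_fplus_predecessor:
  assumes a: "a1 > 0" "a2 > 0" "a1 * a2 \<ge> 4"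
    and fin: "finite {k. y k \<noteq> 0}" and vanish: "\<And>k. k \<le> 0 \<Longrightarrow> y k = 0"
    and y: "ratio_bounded {1..} (gam a1 a2) y" and "y n \<noteq> 0"
  obtains i k0 where "i \<in> {1, 2}" "k0 \<ge> 1" "ratio_bounded {1..} (gam a1 a2) (y(k0 := y k0 - 1))"
    "fplus a1 a2 i (y(k0 := y k0 - 1)) = y"
proof -
  define n0 where "n0 = Max {k. y k \<noteq> 0}"
  have top: "y n0 \<noteq> 0" "\<And>j. y j \<noteq> 0 \<Longrightarrow> j \<le> n0"
    using Max_in[OF fin] Max_ge[OF fin] \<open>y n \<noteq> 0\<close> by (auto simp: n0_def)
  then have "y n0 > 0" "n0 \<ge> 1"
    using ratio_bounded_nonneg[OF y, of n0] vanish[of n0] by force+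
  define i where "i = ik n0"
  let ?Q = "\<lambda>k. k \<ge> 1 \<and> ik k = i"
  let ?M = "Max {sigma_plus a1 a2 y k | k. ?Q k}"
  have finite_values: "finite {sigma_plus a1 a2 y k | k. ?Q k}"
    by (rule finite_sigma_plus_values[OF fin])
  have "{j. n0 < j \<and> y j \<noteq> 0} = {}"
    using top(2) by force
  then have "0 < sigma_plus a1 a2 y n0"
    using \<open>y n0 > 0\<close> by (simp add: sigma_plus_def)
  also have "\<dots> \<le> ?M"
    using finite_values \<open>n0 \<ge> 1\<close> by (intro Max_ge) (auto simp: i_def)
  finally have above: "sigma_plus a1 a2 y k < ?M" if "?Q k" "k > n0" for k
    using sigma_plus_above_support[of y n0 k a1 a2] top(2) that by simp
  have "?Q n0"
    using \<open>n0 \<ge> 1\<close> by (simp add: i_def)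
  then obtain k0 where k0: "?Q k0" "sigma_plus a1 a2 y k0 = ?M"
      "\<And>k. ?Q k \<Longrightarrow> k > k0 \<Longrightarrow> sigma_plus a1 a2 y k < ?M"
    using greatest_maximizer[OF finite_values _ above] by blast
  have "y k0 - ak a1 a2 k0 * y (k0 + 1) + y (k0 + 2) \<ge> 1"
    using k0(1,2) k0(3)[of "k0 + 2"] sigma_plus_diff2[OF fin, of a1 a2 k0] by simp
  then have "ratio_bounded {1..} (gam a1 a2) (y(k0 := y k0 - 1))"
    using y k0(1) gam_pos[OF a] gam_succ[OF a]
    by (intro ratio_bounded_decrement[where A = "ak a1 a2 k0"]) auto
  moreover have "fplus a1 a2 i (y(k0 := y k0 - 1)) = y"
    using fin k0 by (intro fplus_undoes_decrement) (auto simp: sigmaP_I_def)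
  moreover have "i \<in> {1, 2}"
    using ik_cases by (simp add: i_def)
  ultimately show ?thesis
    using k0(1) that by blast
qed

lemma plus_img_if_ratio_bounded:
  assumes a: "a1 > 0" "a2 > 0" "a1 * a2 \<ge> 4"
  shows "finite {k. y k \<noteq> 0} \<Longrightarrow> (\<And>k. k \<le> 0 \<Longrightarrow> y k = 0) \<Longrightarrow> ratio_bounded {1..} (gam a1 a2) y
    \<Longrightarrow> y \<in> plus_img a1 a2"
proof (induction "nat (\<Sum>k | y k \<noteq> 0. y k)" arbitrary: y rule: less_induct)
  case (less y)
  show ?case
  proof (cases "y = (\<lambda>_. 0)")
    case True
    then show ?thesis
      using plus_img.zero by simp
  next
    case False
    then obtain n where "y n \<noteq> 0"
      by auto
    then obtain i k0 where i: "i \<in> {1, 2}" and k0: "k0 \<ge> 1"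
      and z_bounded: "ratio_bounded {1..} (gam a1 a2) (y(k0 := y k0 - 1))"
      and fplus_z: "fplus a1 a2 i (y(k0 := y k0 - 1)) = y"
      using ratio_bounded_has_fplus_predecessor[OF a less.prems] by blast
    have z_fin: "finite {k. (y(k0 := y k0 - 1)) k \<noteq> 0}"
      by (rule finite_support_update[OF less.prems(1)])
    have "(\<Sum>k | (y(k0 := y k0 - 1)) k \<noteq> 0. (y(k0 := y k0 - 1)) k) = (\<Sum>k | y k \<noteq> 0. y k) - 1"
      using sum_support_update[OF less.prems(1)] by simp
    moreover have "0 \<le> (\<Sum>k | (y(k0 := y k0 - 1)) k \<noteq> 0. (y(k0 := y k0 - 1)) k)"
      using ratio_bounded_nonneg[OF z_bounded] by (simp add: sum_nonneg)
    ultimately have "y(k0 := y k0 - 1) \<in> plus_img a1 a2"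
      using less.hyps[OF _ z_fin _ z_bounded] less.prems(2) k0 by simp
    then show ?thesis
      using plus_img.step[OF _ i] fplus_z by metis
  qed
qed

(* k -> 1 - k exchanges the two colours, turning Z^{+infinity} for (a1, a2) into Z^{-infinity}
   for (a2, a1). *)
definition mirror :: "(int \<Rightarrow> int) \<Rightarrow> int \<Rightarrow> int" where
  "mirror x m = - x (1 - m)"

lemma mirror_mirror [simp]: "mirror (mirror x) = x"
  by (simp add: mirror_def fun_eq_iff)

lemma ik_mirror: "ik (1 - k) = 3 - ik k"
  by (simp add: ik_def)

lemma cartan_swap: "i \<in> {1, 2} \<Longrightarrow> j \<in> {1, 2} \<Longrightarrow> cartan a2 a1 (3 - i) (3 - j) = cartan a1 a2 i j"
  by (auto simp: cartan_def)

lemma gam_mirror: "gam a1 a2 (1 - k) = gam a2 a1 k"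
  by (simp add: gam_def alpha_c_def beta_c_def mult.commute)

lemma sigma_minus_mirror: "sigma_minus a1 a2 (mirror y) k = sigma_plus a2 a1 y (1 - k)"
proof -
  have "{j. j < k \<and> mirror y j \<noteq> 0} = (\<lambda>m. 1 - m) ` {m. 1 - k < m \<and> y m \<noteq> 0}"
    by (force simp: mirror_def image_iff intro: exI[of _ "1 - j" for j])
  moreover have "cartan a1 a2 (ik k) (ik (1 - m)) = cartan a2 a1 (ik (1 - k)) (ik m)" for m
    using cartan_swap[of "ik k" "ik (1 - m)" a2 a1] ik_cases[of k] ik_cases[of "1 - m"]
    by (simp add: ik_mirror)
  ultimately show ?thesis
    by (simp add: sigma_minus_def sigma_plus_def sum.reindex inj_on_def mirror_def sum_negf)
qed

lemma sigmaM_I_mirror: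
  assumes "i \<in> {1, 2}"
  shows "sigmaM_I a1 a2 (mirror y) i = sigmaP_I a2 a1 y (3 - i)"
proof -
  have "{sigma_minus a1 a2 (mirror y) k | k. k \<le> 0 \<and> ik k = i}
      = {sigma_plus a2 a1 y m | m. m \<ge> 1 \<and> ik m = 3 - i}"
  proof (intro set_eqI iffI)
    fix v assume "v \<in> {sigma_minus a1 a2 (mirror y) k | k. k \<le> 0 \<and> ik k = i}"
    then obtain k where "k \<le> 0" "ik k = i" "v = sigma_plus a2 a1 y (1 - k)"
      by (auto simp: sigma_minus_mirror)
    then show "v \<in> {sigma_plus a2 a1 y m | m. m \<ge> 1 \<and> ik m = 3 - i}"
      by (auto simp: ik_mirror intro!: exI[of _ "1 - k"])
  next
    fix v assume "v \<in> {sigma_plus a2 a1 y m | m. m \<ge> 1 \<and> ik m = 3 - i}"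
    then obtain m where "m \<ge> 1" "ik m = 3 - i" "v = sigma_plus a2 a1 y m"
      by blast
    then show "v \<in> {sigma_minus a1 a2 (mirror y) k | k. k \<le> 0 \<and> ik k = i}"
      by (auto simp: sigma_minus_mirror ik_mirror intro!: exI[of _ "1 - m"])
  qed
  then show ?thesis
    by (simp add: sigmaM_I_def sigmaP_I_def)
qed

lemma eminus_mirror:
  assumes fin: "finite {j. y j \<noteq> 0}" and "i \<in> {1, 2}"
  shows "eminus a1 a2 i (mirror y) = mirror (fplus a2 a1 (3 - i) y)"
proof -
  let ?Q = "\<lambda>m. m \<ge> 1 \<and> ik m = 3 - i"
  let ?M = "Max {sigma_plus a2 a1 y m | m. ?Q m}"
  have M_eq: "sigmaP_I a2 a1 y (3 - i) = ?M"
    by (simp add: sigmaP_I_def)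
  have Q: "?Q (3 - i)"
    using \<open>i \<in> {1, 2}\<close> by (auto simp: ik_def)
  have no_below: "sigma_plus a2 a1 y m < ?M" if "?Q m" "m < 1" for m
    using that by simp
  obtain k0 where k0: "?Q k0" "sigma_plus a2 a1 y k0 = ?M"
      "\<And>m. ?Q m \<Longrightarrow> m < k0 \<Longrightarrow> sigma_plus a2 a1 y m < ?M"
      "(LEAST m. ?Q m \<and> sigma_plus a2 a1 y m = ?M) = k0"
    using least_maximizer[OF finite_sigma_plus_values[OF fin] Q no_below] by blast
  have greatest: "(GREATEST k. k \<le> 0 \<and> ik k = i \<and> sigma_minus a1 a2 (mirror y) k = sigmaM_I a1 a2 (mirror y) i)
      = 1 - k0"
  proof (rule Greatest_equality)
    show "1 - k0 \<le> 0 \<and> ik (1 - k0) = i \<and> sigma_minus a1 a2 (mirror y) (1 - k0) = sigmaM_I a1 a2 (mirror y) i"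
      using k0(1,2) sigmaM_I_mirror[OF \<open>i \<in> {1, 2}\<close>] M_eq by (simp add: sigma_minus_mirror ik_mirror)
    show "k \<le> 1 - k0"
      if "k \<le> 0 \<and> ik k = i \<and> sigma_minus a1 a2 (mirror y) k = sigmaM_I a1 a2 (mirror y) i" for k
    proof -
      have "?Q (1 - k)" "sigma_plus a2 a1 y (1 - k) = ?M"
        using that sigmaM_I_mirror[OF \<open>i \<in> {1, 2}\<close>] M_eq by (simp_all add: sigma_minus_mirror ik_mirror)
      then have "\<not> 1 - k < k0"
        using k0(3)[of "1 - k"] by auto
      then show ?thesis
        by simp
    qed
  qed
  have least: "(LEAST m. m \<ge> 1 \<and> ik m = 3 - i \<and> sigma_plus a2 a1 y m = sigmaP_I a2 a1 y (3 - i)) = k0"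
    using k0(4) M_eq by simp
  show ?thesis
    unfolding eminus_def fplus_def Let_def greatest least by (simp add: mirror_def fun_eq_iff)
qed

lemma finite_support_mirror:
  assumes "finite {k. x k \<noteq> 0}"
  shows "finite {k. mirror x k \<noteq> 0}"
proof (rule finite_subset[OF _ finite_imageI[OF assms]])
  show "{k. mirror x k \<noteq> 0} \<subseteq> (\<lambda>j. 1 - j) ` {j. x j \<noteq> 0}"
  proof
    fix k assume "k \<in> {k. mirror x k \<noteq> 0}"
    then show "k \<in> (\<lambda>j. 1 - j) ` {j. x j \<noteq> 0}"
      by (intro image_eqI[of _ _ "1 - k"]) (auto simp: mirror_def)
  qed
qed

lemma plus_img_finite_support: "y \<in> plus_img a1 a2 \<Longrightarrow> finite {k. y k \<noteq> 0}"
proof (induction rule: plus_img.induct)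
  case (step x i)
  show ?case
    unfolding fplus_def Let_def using step.IH by (rule finite_support_update)
qed simp

lemma mirror_plus_img: "y \<in> plus_img a2 a1 \<Longrightarrow> mirror y \<in> minus_img a1 a2"
proof (induction rule: plus_img.induct)
  case zero
  then show ?case
    using minus_img.zero by (simp add: mirror_def)
next
  case (step x i)
  then have "mirror (fplus a2 a1 i x) = eminus a1 a2 (3 - i) (mirror x)"
    using eminus_mirror[OF plus_img_finite_support[OF step.hyps(1)], of "3 - i" a1 a2] by auto
  moreover have "3 - i \<in> {1, 2}"
    using step.hyps(2) by auto
  ultimately show ?case
    using minus_img.step[OF step.IH] by simp
qed

lemma positive_part_in_plus_img:
  assumes a: "a1 > 0" "a2 > 0" "a1 * a2 \<ge> 4" and x: "x \<in> SigmaSet a1 a2 k1 k2"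
  shows "(\<lambda>k. if k \<ge> 1 then x k else 0) \<in> plus_img a1 a2"
proof (rule plus_img_if_ratio_bounded[OF a])
  show "finite {k. (if k \<ge> 1 then x k else 0) \<noteq> 0}"
    using x by (auto simp: SigmaSet_iff elim!: finite_subset[rotated])
  show "ratio_bounded {1..} (gam a1 a2) (\<lambda>k. if k \<ge> 1 then x k else 0)"
    unfolding ratio_bounded_def
  proof (intro conjI allI ballI)
    show "0 \<le> (if k \<ge> 1 then x k else 0)" for k
      using SigmaSet_ratio_conditions(1)[OF x, of k] by (auto simp: shifted_def)
    show "(if k + 1 \<ge> 1 then x (k + 1) else 0) \<le> gam a1 a2 k * (if k \<ge> 1 then x k else 0)"
      if "k \<in> {1..}" for k
      using SigmaSet_ratio_conditions(3)[OF x, of k] that by (simp add: shifted_def)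
  qed
qed simp

lemma nonpositive_part_in_minus_img:
  assumes a: "a1 > 0" "a2 > 0" "a1 * a2 \<ge> 4" and x: "x \<in> SigmaSet a1 a2 k1 k2"
  shows "(\<lambda>k. if k \<le> 0 then x k else 0) \<in> minus_img a1 a2"
proof -
  define neg where "neg = (\<lambda>k. if k \<le> 0 then x k else 0)"
  have "finite {k. neg k \<noteq> 0}"
    using x by (auto simp: SigmaSet_iff neg_def elim!: finite_subset[rotated])
  then have "finite {k. mirror neg k \<noteq> 0}"
    by (rule finite_support_mirror)
  moreover have "ratio_bounded {1..} (gam a2 a1) (mirror neg)"
    unfolding ratio_bounded_def
  proof (intro conjI allI ballI)
    show "0 \<le> mirror neg m" for m
      using SigmaSet_ratio_conditions(2)[OF x, of "1 - m"] by (auto simp: mirror_def neg_def shifted_def)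
    show "mirror neg (m + 1) \<le> gam a2 a1 m * mirror neg m" if "m \<in> {1..}" for m
      using SigmaSet_ratio_conditions(4)[OF x, of "- m"] that gam_mirror[of a1 a2 m]
      by (simp add: mirror_def neg_def shifted_def)
  qed
  moreover have "a2 * a1 \<ge> 4"
    using a(3) by (simp add: mult.commute)
  ultimately have "mirror neg \<in> plus_img a2 a1"
    using a by (intro plus_img_if_ratio_bounded) (auto simp: neg_def mirror_def)
  then show ?thesis
    using mirror_plus_img[of "mirror neg"] by (simp add: neg_def)
qed

lemma SigmaSet_subset_Im_Psi:
  assumes "a1 > 0" "a2 > 0" "a1 * a2 \<ge> 4"
  shows "SigmaSet a1 a2 k1 k2 \<subseteq> Im_Psi a1 a2"
  using positive_part_in_plus_img[OF assms] nonpositive_part_in_minus_img[OF assms]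
  by (auto simp: Im_Psi_def)

theorem theorem3p2:
  fixes a1 a2 k1 k2 :: int
  assumes "a1 \<ge> 1" and "a2 \<ge> 1" and "a1 * a2 > 4"
    and "k1 > 0" and "k2 > 0"
    and "(a1 \<ge> 2 \<and> a2 \<ge> 2) \<longrightarrow>
           ((k2 \<le> k1 \<and> k1 < (a1 - 1) * k2) \<or> (k1 < k2 \<and> k2 \<le> (a2 - 1) * k1))"
    and "a1 = 1 \<longrightarrow> 2 * k1 \<le> k2 \<and> k2 \<le> (a2 - 2) * k1"
    and "a2 = 1 \<longrightarrow> 2 * k2 \<le> k1 \<and> k1 \<le> (a1 - 2) * k2"
  shows "SigmaSet a1 a2 k1 k2 \<subseteq> Im_Psi a1 a2
    \<and> (\<forall>x\<in>SigmaSet a1 a2 k1 k2. \<forall>i\<in>{1, 2}.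
          (case etildeZ a1 a2 k1 (- k2) i x of None \<Rightarrow> True
             | Some y \<Rightarrow> y \<in> SigmaSet a1 a2 k1 k2)
        \<and> (case ftildeZ a1 a2 k1 (- k2) i x of None \<Rightarrow> True
             | Some y \<Rightarrow> y \<in> SigmaSet a1 a2 k1 k2))"
proof -
  have "a1 > 0" "a2 > 0" "a1 * a2 \<ge> 4"
    using assms(1-3) by linarith+
  then show ?thesis
    using SigmaSet_subset_Im_Psi crystal_operators_preserve_SigmaSet by blast
qed

end
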